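(* For every zero-error variable-length $(k,N)$ network code for the network in the context and every $\boldsymbol\sigma\in\{0,1,2,3\}^k$ having exactly $x$ components equal to $1$ and $y$ components equal to $2$, $$H(\mathbf Z_1^N,\mathbf Z_2^N\mid\boldsymbol\Sigma=\boldsymbol\sigma)\ \ge\ H(\mathbf p^\star_{x,y}).$$
   Context: Network: sources $s_1,s_2,s_3$, terminal $t$, edges $(s_3,s_1),(s_3,s_2),(s_1,t),(s_2,t)$; $s_j$ observes $\mathbf X_j\in\{0,1\}^k$, all $3k$ bits i.i.d. uniform; $s_1,s_2$ receive $\mathbf X_3$. $\mathcal Z$ is a finite alphabet, $|\mathcal Z|\ge2$. A variable-length $(k,N)$ network code: encoders $\phi_1,\phi_2:\{0,1\}^k\times\{0,1\}^k\to\mathcal Z^*$ giving sequences $\mathbf Z_1=\phi_1(\mathbf X_1,\mathbf X_3)$, $\mathbf Z_2=\phi_2(\mathbf X_2,\mathbf X_3)$; a positive-integer-valued stopping time $N$ for the sequence of pairs $(\mathbf Z_1(m),\mathbf Z_2(m))_{m\ge1}$; a decoder $\hat{\boldsymbol\Sigma}=\psi(\mathbf Z_1^N,\mathbf Z_2^N)$, $\mathbf Z_j^N$ the first $N$ symbols of $\mathbf Z_j$. $\boldsymbol\Sigma=\mathbf X_1+\mathbf X_2+\mathbf X_3$ (componentwise integer sum); zero-error means $\Pr(\hat{\boldsymbol\Sigma}\ne\boldsymbol\Sigma)=0$. Clumpy distribution: for $m=x+y$, $L=2^m$, $M=3^m$, let $n_1\ge n_2\ge\dots\ge n_L$ be the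 list in which, for each $u=0,1,\dots,m$, the value $2^{m-u}$ appears exactly $\binom mu$ times (so $\sum_in_i=M$); let $\mathbf e_i^\star\in\{0,1\}^L$ have ones in its first $n_i$ positions and zeros elsewhere; $\mathbf p^\star_{x,y}=\frac1M\sum_{i=1}^L\mathbf e_i^\star$. $H$ denotes Shannon entropy in bits. *)

theory Defs
  imports "HOL-Probability.Probability"
begin

definition bitvecs :: "nat \<Rightarrow> nat list set" where
  "bitvecs k = {xs. length xs = k \<and> set xs \<subseteq> {0, 1}}"

definition outcomes :: "nat \<Rightarrow> (nat list \<times> nat list \<times> nat list) set" where
  "outcomes k = bitvecs k \<times> bitvecs k \<times> bitvecs k"

definition source_pmf :: "nat \<Rightarrow> (nat list \<times> nat list \<times> nat list) pmf" where
  "source_pmf k = pmf_of_set (outcomes k)"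

definition Sigma_sum :: "nat \<Rightarrow> nat list \<times> nat list \<times> nat list \<Rightarrow> nat list" where
  "Sigma_sum k \<omega> = (case \<omega> of (x1, x2, x3) \<Rightarrow> map (\<lambda>i. x1 ! i + x2 ! i + x3 ! i) [0..<k])"

text \<open>First n symbols of a sequence (symbol m of the paper, m \<ge> 1, is index m-1 here).\<close>
definition prefix_seq :: "nat \<Rightarrow> (nat \<Rightarrow> 'z) \<Rightarrow> 'z list" where
  "prefix_seq n Z = map Z [0..<n]"

text \<open>A zero-error variable-length (k,N) network code: encoders phi1, phi2 (phi_j gets
  X_j and X_3), a positive-integer-valued stopping time N (a random variable on the outcome
  space such that whether N = n is determined by the first n pairs (Z1(m), Z2(m))), and a
  decoder psi applied to the first N symbols of Z1 and Z2, with Pr(decoded \<noteq> Sigma) = 0.\<close>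
definition zero_error_vl_code ::
  "nat \<Rightarrow> (nat list \<Rightarrow> nat list \<Rightarrow> nat \<Rightarrow> 'z) \<Rightarrow> (nat list \<Rightarrow> nat list \<Rightarrow> nat \<Rightarrow> 'z)
     \<Rightarrow> (nat list \<times> nat list \<times> nat list \<Rightarrow> nat) \<Rightarrow> ('z list \<Rightarrow> 'z list \<Rightarrow> nat list) \<Rightarrow> bool" where
  "zero_error_vl_code k \<phi>1 \<phi>2 N \<psi> \<longleftrightarrow>
     (\<forall>\<omega>\<in>outcomes k. N \<omega> \<ge> 1) \<and>
     (\<forall>x1 x2 x3 x1' x2' x3'. (x1, x2, x3) \<in> outcomes k \<longrightarrow> (x1', x2', x3') \<in> outcomes k \<longrightarrow>
        (\<forall>m < N (x1, x2, x3). \<phi>1 x1 x3 m = \<phi>1 x1' x3' m \<and> \<phi>2 x2 x3 m = \<phi>2 x2' x3' m) \<longrightarrow>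
        N (x1', x2', x3') = N (x1, x2, x3)) \<and>
     measure_pmf.prob (source_pmf k)
       {(x1, x2, x3). \<psi> (prefix_seq (N (x1, x2, x3)) (\<phi>1 x1 x3))
                          (prefix_seq (N (x1, x2, x3)) (\<phi>2 x2 x3))
                      \<noteq> Sigma_sum k (x1, x2, x3)} = 0"

definition code_output ::
  "(nat list \<Rightarrow> nat list \<Rightarrow> nat \<Rightarrow> 'z) \<Rightarrow> (nat list \<Rightarrow> nat list \<Rightarrow> nat \<Rightarrow> 'z)
     \<Rightarrow> (nat list \<times> nat list \<times> nat list \<Rightarrow> nat) \<Rightarrow> nat list \<times> nat list \<times> nat list \<Rightarrow> 'z list \<times> 'z list" where
  "code_output \<phi>1 \<phi>2 N \<omega> = (case \<omega> of (x1, x2, x3) \<Rightarrow>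
     (prefix_seq (N (x1, x2, x3)) (\<phi>1 x1 x3), prefix_seq (N (x1, x2, x3)) (\<phi>2 x2 x3)))"

definition entropy_pmf :: "'a pmf \<Rightarrow> real" where
  "entropy_pmf p = - (\<Sum>a\<in>set_pmf p. pmf p a * log 2 (pmf p a))"

definition entropy_vec :: "real list \<Rightarrow> real" where
  "entropy_vec ps = - (\<Sum>p\<leftarrow>ps. if p = 0 then 0 else p * log 2 p)"

definition cond_output_entropy ::
  "nat \<Rightarrow> (nat list \<Rightarrow> nat list \<Rightarrow> nat \<Rightarrow> 'z) \<Rightarrow> (nat list \<Rightarrow> nat list \<Rightarrow> nat \<Rightarrow> 'z)
     \<Rightarrow> (nat list \<times> nat list \<times> nat list \<Rightarrow> nat) \<Rightarrow> nat list \<Rightarrow> real" where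
  "cond_output_entropy k \<phi>1 \<phi>2 N \<sigma> =
     entropy_pmf (map_pmf (code_output \<phi>1 \<phi>2 N)
        (cond_pmf (source_pmf k) {\<omega>. Sigma_sum k \<omega> = \<sigma>}))"

definition clumpy_n :: "nat \<Rightarrow> nat list" where
  "clumpy_n m = concat (map (\<lambda>u. replicate (m choose u) (2 ^ (m - u))) [0..<m + 1])"

definition clumpy_e :: "nat \<Rightarrow> nat \<Rightarrow> real list" where
  "clumpy_e m i = map (\<lambda>j. if j < clumpy_n m ! i then 1 else 0) [0..<2 ^ m]"

definition clumpy_p :: "nat \<Rightarrow> nat \<Rightarrow> real list" where
  "clumpy_p x y = (let m = x + y in
     map (\<lambda>j. (\<Sum>i<2 ^ m. clumpy_e m i ! j) / 3 ^ m) [0..<2 ^ m])"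

end

theory Submission
  imports Defs
begin

text \<open>Given \<open>\<Sigma> = \<sigma>\<close>, the outcome is uniform on a fiber of \<open>3^m\<close> triples, \<open>m = x + y\<close> being the
  number of positions with \<open>\<sigma>\<^sub>i \<in> {1, 2}\<close>. Group the fiber into cells by the set \<open>S\<close> of positions
  where \<open>X\<^sub>1 + X\<^sub>2 = 1\<close>: the set \<open>S\<close> determines \<open>X\<^sub>3\<close>, and its cell has \<open>2^|S|\<close> elements.
  On a cell the code output is injective: if two outcomes with the same \<open>X\<^sub>3\<close> had the same
  output, then feeding encoder 1 from the first and encoder 2 from the second would produce that
  output again (the stopping time only sees symbols already sent), and zero error forces
  \<open>X\<^sub>1\<close> and \<open>X\<^sub>2\<close> to agree. So each output class meets each cell at most once, and for the
  convex function \<open>t log t\<close> of the class sizes the sum is largest when the classes are clumped: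
  the \<open>j\<close>-th class takes one point from every cell of size \<open>> j\<close>. Those class sizes are
  \<open>3^m\<close> times the entries of the clumpy distribution.\<close>

definition xlog2x :: "nat \<Rightarrow> real" where
  "xlog2x n = real n * log 2 (real n)"

lemma convex_on_xlnx: "convex_on {0<..} (\<lambda>x::real. x * ln x)"
proof (rule convex_on_realI[where f'="\<lambda>x. ln x + 1"])
  fix x :: real assume "x \<in> {0<..}"
  then show "((\<lambda>x. x * ln x) has_real_derivative ln x + 1) (at x)"
    by (auto intro!: derivative_eq_intros)
qed auto

lemma xlog2x_increment_le_Suc:
  "xlog2x (Suc n) - xlog2x n \<le> xlog2x (Suc (Suc n)) - xlog2x (Suc n)"
proof (cases "n = 0")
  case True
  then show ?thesis by (simp add: xlog2x_def)
next
  case False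
  define h where "h = (\<lambda>x::real. x * ln x)"
  have "h ((1 - 1/2) *\<^sub>R real n + (1/2) *\<^sub>R real (Suc (Suc n)))
      \<le> (1 - 1/2) * h (real n) + (1/2) * h (real (Suc (Suc n)))"
    using False unfolding h_def by (intro convex_onD[OF convex_on_xlnx]) auto
  moreover have "(1 - 1/2) *\<^sub>R real n + (1/2) *\<^sub>R real (Suc (Suc n)) = real (Suc n)"
    by (simp add: field_simps)
  ultimately have "(h (real (Suc n)) - h (real n)) / ln 2 \<le> (h (real (Suc (Suc n))) - h (real (Suc n))) / ln 2"
    by (intro divide_right_mono) auto
  moreover have "xlog2x t = h (real t) / ln 2" for t
    unfolding h_def xlog2x_def log_def by simp
  ultimately show ?thesis by (simp add: diff_divide_distrib)
qed

lemma xlog2x_increment_mono: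
  "a \<le> b \<Longrightarrow> xlog2x (Suc a) - xlog2x a \<le> xlog2x (Suc b) - xlog2x b"
proof (induction b rule: dec_induct)
  case (step n)
  then show ?case using xlog2x_increment_le_Suc[of n] by linarith
qed simp

lemma sum_card_fibers:
  assumes "finite \<Omega>" "finite G" "g ` \<Omega> \<subseteq> G"
  shows "(\<Sum>i\<in>G. card {w\<in>\<Omega>. g w = i}) = card \<Omega>"
  using sum.group[OF assms, of "\<lambda>_. 1::nat"] by simp

lemma entropy_pmf_map_pmf_of_set:
  assumes "finite \<Omega>" "\<Omega> \<noteq> {}"
  shows "entropy_pmf (map_pmf f (pmf_of_set \<Omega>)) =
     log 2 (card \<Omega>) - (\<Sum>c\<in>f`\<Omega>. xlog2x (card {w\<in>\<Omega>. f w = c})) / card \<Omega>"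
proof -
  define n where "n c = card {w\<in>\<Omega>. f w = c}" for c
  define M where "M = card \<Omega>"
  have M: "M > 0" using assms unfolding M_def by (simp add: card_gt_0_iff)
  have pmf: "pmf (map_pmf f (pmf_of_set \<Omega>)) c = n c / M" for c
  proof -
    have "\<Omega> \<inter> f -` {c} = {w\<in>\<Omega>. f w = c}" by auto
    then show ?thesis using assms unfolding n_def M_def by (simp add: pmf_map measure_pmf_of_set)
  qed
  have summand: "(n c / M) * log 2 (n c / M) = xlog2x (n c) / M - (n c / M) * log 2 M"
    if "c \<in> f ` \<Omega>" for c
  proof -
    have "n c > 0" using that assms unfolding n_def by (auto simp: card_gt_0_iff)
    then show ?thesis using M by (simp add: xlog2x_def log_divide algebra_simps)
  qed
  have "(\<Sum>c\<in>f`\<Omega>. n c) = M"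
    unfolding n_def M_def by (rule sum_card_fibers) (use assms in auto)
  then have total: "(\<Sum>c\<in>f`\<Omega>. real (n c)) / M = 1" using M by (simp flip: of_nat_sum)
  have "entropy_pmf (map_pmf f (pmf_of_set \<Omega>)) = - (\<Sum>c\<in>f`\<Omega>. (n c / M) * log 2 (n c / M))"
    unfolding entropy_pmf_def using assms by (simp add: pmf)
  also have "\<dots> = - (\<Sum>c\<in>f`\<Omega>. xlog2x (n c) / M - (n c / M) * log 2 M)"
    using summand by (intro arg_cong[where f=uminus] sum.cong) simp_all
  also have "\<dots> = (\<Sum>c\<in>f`\<Omega>. real (n c)) / M * log 2 M - (\<Sum>c\<in>f`\<Omega>. xlog2x (n c)) / M"
    by (simp add: sum_subtractf sum_divide_distrib[symmetric] sum_distrib_right[symmetric])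
  also have "\<dots> = log 2 M - (\<Sum>c\<in>f`\<Omega>. xlog2x (n c)) / M"
    unfolding total by simp
  finally show ?thesis unfolding n_def M_def .
qed

lemma entropy_vec_counts:
  fixes t :: "nat \<Rightarrow> nat"
  assumes "(\<Sum>j<K. t j) = M" "M > 0"
  shows "entropy_vec (map (\<lambda>j. real (t j) / M) [0..<K]) = log 2 M - (\<Sum>j<K. xlog2x (t j)) / M"
proof -
  have summand: "(if real (t j) / M = 0 then 0 else real (t j) / M * log 2 (real (t j) / M))
      = xlog2x (t j) / M - real (t j) / M * log 2 M" for j
    using assms(2) by (cases "t j = 0") (simp_all add: xlog2x_def log_divide algebra_simps)
  have "(\<Sum>j<K. real (t j)) / M = 1" using assms by (simp flip: of_nat_sum)
  moreover have "entropy_vec (map (\<lambda>j. real (t j) / M) [0..<K])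
      = (\<Sum>j<K. real (t j)) / M * log 2 M - (\<Sum>j<K. xlog2x (t j)) / M"
    unfolding entropy_vec_def
    by (simp only: map_map o_def interv_sum_list_conv_sum_set_nat set_upt atLeast0LessThan summand)
       (simp add: sum_subtractf sum_divide_distrib[symmetric] sum_distrib_right[symmetric])
  ultimately show ?thesis by simp
qed

lemma sum_card_thresholds:
  assumes "finite G" "\<And>i. i \<in> G \<Longrightarrow> n i \<le> K"
  shows "(\<Sum>j<K. card {i\<in>G. j < n i}) = (\<Sum>i\<in>G. n i)"
proof -
  have "(\<Sum>j<K. card {i\<in>G. j < n i}) = (\<Sum>j<K. \<Sum>i\<in>G. of_bool (j < n i))"
    using assms(1) by (simp add: sum.If_cases Int_def)
  also have "\<dots> = (\<Sum>i\<in>G. \<Sum>j<K. of_bool (j < n i))" by (rule sum.swap)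
  also have "\<dots> = (\<Sum>i\<in>G. n i)"
  proof (rule sum.cong)
    fix i assume "i \<in> G"
    then have "{..<K} \<inter> {j. j < n i} = {..<n i}" using assms(2)[OF \<open>i \<in> G\<close>] by auto
    then show "(\<Sum>j<K. of_bool (j < n i)) = n i" by (simp add: sum.If_cases)
  qed simp
  finally show ?thesis .
qed

lemma card_fiber_inj_on:
  assumes "inj_on f F"
  shows "card {w\<in>F. f w = c} = of_bool (c \<in> f ` F)"
proof (cases "c \<in> f ` F")
  case True
  then obtain w0 where "w0 \<in> F" "f w0 = c" by auto
  then have "{w\<in>F. f w = c} = {w0}" using assms by (auto dest: inj_onD)
  then show ?thesis using True by simp
next
  case False
  then have "{w\<in>F. f w = c} = {}" by auto
  then show ?thesis using False by (simp only: card.empty of_bool_eq)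
qed

lemma sum_fiber_sizes_remove_inj_on:
  fixes \<phi> :: "nat \<Rightarrow> real"
  assumes "finite \<Omega>" "F \<subseteq> \<Omega>" "inj_on f F" "\<phi> 0 = 0"
    and incr: "\<And>a b. a \<le> b \<Longrightarrow> \<phi> (Suc a) - \<phi> a \<le> \<phi> (Suc b) - \<phi> b"
    and L: "\<And>c. card {w\<in>\<Omega> - F. f w = c} \<le> L"
  shows "(\<Sum>c\<in>f`\<Omega>. \<phi> (card {w\<in>\<Omega>. f w = c}))
      \<le> (\<Sum>c\<in>f`(\<Omega> - F). \<phi> (card {w\<in>\<Omega> - F. f w = c})) + card F * (\<phi> (Suc L) - \<phi> L)"
proof -
  define a where "a c = card {w\<in>\<Omega> - F. f w = c}" for c
  have card_split: "card {w\<in>\<Omega>. f w = c} = a c + of_bool (c \<in> f ` F)" for c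
  proof -
    have "card {w\<in>\<Omega>. f w = c} = card ({w\<in>\<Omega> - F. f w = c} \<union> {w\<in>F. f w = c})"
      using assms(2) by (intro arg_cong[where f=card]) auto
    also have "\<dots> = a c + card {w\<in>F. f w = c}"
      unfolding a_def by (rule card_Un_disjoint) (use assms(1,2) in \<open>auto intro: finite_subset\<close>)
    finally show ?thesis using card_fiber_inj_on[OF assms(3)] by simp
  qed
  have "a c = 0" if "c \<notin> f ` (\<Omega> - F)" for c
  proof -
    have "{w\<in>\<Omega> - F. f w = c} = {}" using that by auto
    then show ?thesis unfolding a_def by (simp only: card.empty)
  qed
  then have "(\<Sum>c\<in>f`(\<Omega> - F). \<phi> (a c)) = (\<Sum>c\<in>f`\<Omega>. \<phi> (a c))"
    by (intro sum.mono_neutral_left) (use assms(1,4) in auto)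
  moreover have "(\<Sum>c\<in>f`\<Omega>. \<phi> (card {w\<in>\<Omega>. f w = c}))
      = (\<Sum>c\<in>f`\<Omega>. \<phi> (a c)) + (\<Sum>c\<in>f`\<Omega>. if c \<in> f ` F then \<phi> (Suc (a c)) - \<phi> (a c) else 0)"
    unfolding card_split sum.distrib[symmetric] by (intro sum.cong) auto
  moreover have "(\<Sum>c\<in>f`\<Omega>. if c \<in> f ` F then \<phi> (Suc (a c)) - \<phi> (a c) else 0)
      = (\<Sum>c\<in>f`F. \<phi> (Suc (a c)) - \<phi> (a c))"
    using assms(1,2) by (simp add: sum.If_cases Int_absorb1 image_mono)
  moreover have "(\<Sum>c\<in>f`F. \<phi> (Suc (a c)) - \<phi> (a c)) \<le> card F * (\<phi> (Suc L) - \<phi> L)"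
    using sum_bounded_above[of "f ` F" "\<lambda>c. \<phi> (Suc (a c)) - \<phi> (a c)" "\<phi> (Suc L) - \<phi> L"]
      incr[OF L] card_image[OF assms(3)] by (simp add: a_def)
  ultimately show ?thesis unfolding a_def by linarith
qed

lemma sum_thresholds_remove_min:
  fixes \<phi> :: "nat \<Rightarrow> real" and n :: "'i \<Rightarrow> nat"
  assumes "finite G" "i0 \<in> G" "\<And>i. i \<in> G \<Longrightarrow> n i0 \<le> n i" "n i0 \<le> K"
  shows "(\<Sum>j<K. \<phi> (card {i\<in>G. j < n i}))
       = (\<Sum>j<K. \<phi> (card {i\<in>G - {i0}. j < n i})) + n i0 * (\<phi> (card G) - \<phi> (card (G - {i0})))"
proof -
  define D where "D = \<phi> (card G) - \<phi> (card (G - {i0}))"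
  have step: "\<phi> (card {i\<in>G. j < n i}) = \<phi> (card {i\<in>G - {i0}. j < n i}) + (if j < n i0 then D else 0)" for j
  proof (cases "j < n i0")
    case True
    then have "{i\<in>G. j < n i} = G" "{i\<in>G - {i0}. j < n i} = G - {i0}"
      using assms(3) by (auto intro: less_le_trans)
    then show ?thesis using True unfolding D_def by simp
  next
    case False
    then have "{i\<in>G. j < n i} = {i\<in>G - {i0}. j < n i}" by auto
    then show ?thesis using False by simp
  qed
  have "(\<Sum>j<K. if j < n i0 then D else 0) = n i0 * D"
  proof -
    have "{..<K} \<inter> {j. j < n i0} = {..<n i0}" using assms(4) by auto
    then show ?thesis by (simp add: sum.If_cases)
  qed
  then show ?thesis unfolding step sum.distrib D_def by simp
qed

lemma sum_fiber_sizes_le_thresholds_step: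
  fixes \<phi> :: "nat \<Rightarrow> real" and i0
  assumes "finite G" "finite \<Omega>" "g ` \<Omega> \<subseteq> G" "inj_on (\<lambda>w. (g w, f w)) \<Omega>"
    and "\<phi> 0 = 0" and "\<And>a b. a \<le> b \<Longrightarrow> \<phi> (Suc a) - \<phi> a \<le> \<phi> (Suc b) - \<phi> b"
  defines "n \<equiv> \<lambda>i. card {w\<in>\<Omega>. g w = i}" and "F \<equiv> {w\<in>\<Omega>. g w = i0}"
  assumes i0: "i0 \<in> G" "\<And>i. i \<in> G \<Longrightarrow> n i0 \<le> n i" "n i0 \<le> K"
    and IH: "(\<Sum>c\<in>f`(\<Omega> - F). \<phi> (card {w\<in>\<Omega> - F. f w = c})) \<le> (\<Sum>j<K. \<phi> (card {i\<in>G - {i0}. j < n i}))"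
  shows "(\<Sum>c\<in>f`\<Omega>. \<phi> (card {w\<in>\<Omega>. f w = c})) \<le> (\<Sum>j<K. \<phi> (card {i\<in>G. j < n i}))"
proof -
  have class_bound: "card {w\<in>\<Omega> - F. f w = c} \<le> card (G - {i0})" for c
  proof (rule card_inj_on_le)
    show "inj_on g {w\<in>\<Omega> - F. f w = c}" using assms(4) by (auto simp: inj_on_def)
    show "g ` {w\<in>\<Omega> - F. f w = c} \<subseteq> G - {i0}" using assms(3) by (auto simp: F_def)
  qed (use assms(1) in simp)
  have "inj_on f F" using assms(4) by (auto simp: inj_on_def F_def)
  moreover have "F \<subseteq> \<Omega>" by (simp add: F_def)
  moreover have "Suc (card (G - {i0})) = card G" using assms(1) i0(1) by (rule card_Suc_Diff1)
  moreover have "card F = n i0" by (simp add: F_def n_def)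
  ultimately have "(\<Sum>c\<in>f`\<Omega>. \<phi> (card {w\<in>\<Omega>. f w = c}))
      \<le> (\<Sum>c\<in>f`(\<Omega> - F). \<phi> (card {w\<in>\<Omega> - F. f w = c})) + n i0 * (\<phi> (card G) - \<phi> (card (G - {i0})))"
    using sum_fiber_sizes_remove_inj_on[OF assms(2) _ _ assms(5,6) class_bound] by metis
  then show ?thesis
    using IH sum_thresholds_remove_min[of G i0 n K \<phi>, OF assms(1) i0] by linarith
qed

text \<open>Induction on the number of cells, removing a smallest one: every \<open>f\<close>-class it meets grows
  by one from a size at most \<open>|G| - 1\<close>, while the right-hand side gains exactly
  \<open>\<phi> |G| - \<phi> (|G| - 1)\<close> for each threshold below the size of that cell.\<close>
lemma sum_fiber_sizes_le_thresholds:
  fixes \<phi> :: "nat \<Rightarrow> real" and g :: "'w \<Rightarrow> 'i" and f :: "'w \<Rightarrow> 'c"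
  assumes "finite G" "finite \<Omega>" "g ` \<Omega> \<subseteq> G" "inj_on (\<lambda>w. (g w, f w)) \<Omega>"
    and "\<And>i. i \<in> G \<Longrightarrow> card {w\<in>\<Omega>. g w = i} \<le> K"
    and "\<phi> 0 = 0" and "\<And>a b. a \<le> b \<Longrightarrow> \<phi> (Suc a) - \<phi> a \<le> \<phi> (Suc b) - \<phi> b"
  shows "(\<Sum>c\<in>f`\<Omega>. \<phi> (card {w\<in>\<Omega>. f w = c})) \<le> (\<Sum>j<K. \<phi> (card {i\<in>G. j < card {w\<in>\<Omega>. g w = i}}))"
  using assms(1-5)
proof (induction "card G" arbitrary: G \<Omega> rule: less_induct)
  case less
  show ?case
  proof (cases "G = {}")
    case True
    then show ?thesis using less.prems \<open>\<phi> 0 = 0\<close> by auto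
  next
    case False
    define n where "n i = card {w\<in>\<Omega>. g w = i}" for i
    obtain i0 where i0: "i0 \<in> G" "\<And>i. i \<in> G \<Longrightarrow> n i0 \<le> n i"
      using arg_min_if_finite[OF less.prems(1) False, of n] by (meson not_less)
    define F where "F = {w\<in>\<Omega>. g w = i0}"
    have cells: "{w\<in>\<Omega> - F. g w = i} = {w\<in>\<Omega>. g w = i}" if "i \<in> G - {i0}" for i
      using that unfolding F_def by auto
    have "(\<Sum>c\<in>f`(\<Omega> - F). \<phi> (card {w\<in>\<Omega> - F. f w = c}))
        \<le> (\<Sum>j<K. \<phi> (card {i\<in>G - {i0}. j < card {w\<in>\<Omega> - F. g w = i}}))"
    proof (rule less.hyps)
      show "card (G - {i0}) < card G" using less.prems(1) i0(1) by (rule card_Diff1_less)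
      show "g ` (\<Omega> - F) \<subseteq> G - {i0}" using less.prems(3) unfolding F_def by auto
      show "inj_on (\<lambda>w. (g w, f w)) (\<Omega> - F)" using less.prems(4) by (rule inj_on_subset) auto
      show "card {w\<in>\<Omega> - F. g w = i} \<le> K" if "i \<in> G - {i0}" for i
        using cells[OF that] less.prems(5) that by simp
    qed (use less.prems(1,2) in auto)
    also have "\<dots> = (\<Sum>j<K. \<phi> (card {i\<in>G - {i0}. j < n i}))"
      using cells unfolding n_def by (intro sum.cong arg_cong[where f=\<phi>] arg_cong[where f=card]) auto
    finally show ?thesis
      using sum_fiber_sizes_le_thresholds_step[OF less.prems(1-4) assms(6,7) i0[unfolded n_def]
          less.prems(5)[OF i0(1)]]
      unfolding n_def F_def by blast
  qed
qed

lemma sum_two_power_card_Pow: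
  assumes "finite A"
  shows "(\<Sum>S\<in>Pow A. 2 ^ card S :: nat) = 3 ^ card A"
proof -
  have "(\<Prod>x\<in>A. 2 + 1 :: nat) = (\<Sum>S\<in>Pow A. (\<Prod>x\<in>S. 2) * (\<Prod>x\<in>A - S. 1))"
    by (rule prod_add[OF assms])
  then show ?thesis by simp
qed

lemma card_Pow_two_power_gt:
  fixes j :: nat
  assumes "finite R"
  shows "card {S\<in>Pow R. j < 2 ^ card S} = (\<Sum>s\<le>card R. if j < 2 ^ s then card R choose s else 0)"
proof -
  define A where "A = {S\<in>Pow R. j < 2 ^ card S}"
  have "finite A" using assms by (simp add: A_def)
  moreover have "card ` A \<subseteq> {..card R}" using assms by (auto simp: A_def intro: card_mono)
  ultimately have "card A = (\<Sum>s\<le>card R. card {S\<in>A. card S = s})"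
    using sum.group[of A "{..card R}" card "\<lambda>_. 1::nat"] by simp
  also have "\<dots> = (\<Sum>s\<le>card R. if j < 2 ^ s then card R choose s else 0)"
  proof (rule sum.cong)
    fix s
    have "{S\<in>A. card S = s} = (if j < 2 ^ s then {S. S \<subseteq> R \<and> card S = s} else {})"
      unfolding A_def by auto
    then show "card {S\<in>A. card S = s} = (if j < 2 ^ s then card R choose s else 0)"
      using n_subsets[OF assms, of s] by simp
  qed simp
  finally show ?thesis unfolding A_def .
qed

lemma length_clumpy_n: "length (clumpy_n m) = 2 ^ m"
proof -
  have "length (clumpy_n m) = (\<Sum>u\<leftarrow>[0..<m+1]. m choose u)"
    unfolding clumpy_n_def by (simp add: length_concat o_def)
  also have "\<dots> = (\<Sum>u\<in>{0..<m+1}. m choose u)"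
    by (simp only: interv_sum_list_conv_sum_set_nat set_upt)
  also have "{0..<m+1} = {..m}" by auto
  finally show ?thesis by (simp add: choose_row_sum)
qed

lemma card_clumpy_n_gt:
  "card {i. i < 2 ^ m \<and> j < clumpy_n m ! i} = (\<Sum>s\<le>m. if j < 2 ^ s then m choose s else 0)"
proof -
  have "card {i. i < 2 ^ m \<and> j < clumpy_n m ! i} = length (filter (\<lambda>a. j < a) (clumpy_n m))"
    by (simp add: length_filter_conv_card length_clumpy_n)
  also have "\<dots> = (\<Sum>u\<leftarrow>[0..<m+1]. if j < 2 ^ (m - u) then m choose u else 0)"
    unfolding clumpy_n_def filter_concat length_concat map_map
    by (intro arg_cong[where f=sum_list] map_cong) (auto simp: filter_replicate)
  also have "\<dots> = (\<Sum>u\<in>{0..<m+1}. if j < 2 ^ (m - u) then m choose u else 0)"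
    by (simp only: interv_sum_list_conv_sum_set_nat set_upt)
  also have "{0..<m+1} = {..m}" by auto
  also have "(\<Sum>u\<le>m. if j < 2 ^ (m - u) then m choose u else 0)
      = (\<Sum>u\<le>m. if j < 2 ^ (m - u) then m choose (m - u) else 0)"
    by (intro sum.cong refl) (simp add: binomial_symmetric[symmetric])
  also have "\<dots> = (\<Sum>s\<le>m. if j < 2 ^ s then m choose s else 0)"
    by (rule sum.reindex_bij_witness[where i="\<lambda>s. m - s" and j="\<lambda>u. m - u"]) auto
  finally show ?thesis .
qed

lemma clumpy_p_eq_subset_counts:
  assumes "finite R" "card R = x + y"
  shows "clumpy_p x y = map (\<lambda>j. real (card {S\<in>Pow R. j < 2 ^ card S}) / 3 ^ (x + y)) [0..<2 ^ (x + y)]"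
  unfolding clumpy_p_def Let_def
proof (rule map_cong[OF refl])
  fix j assume "j \<in> set [0..<2 ^ (x + y)]"
  then have "(\<Sum>i<2 ^ (x + y). clumpy_e (x + y) i ! j) = real (card {i. i < 2 ^ (x + y) \<and> j < clumpy_n (x + y) ! i})"
    by (simp add: clumpy_e_def sum.If_cases lessThan_def Collect_conj_eq)
  then show "(\<Sum>i<2 ^ (x + y). clumpy_e (x + y) i ! j) / 3 ^ (x + y)
      = real (card {S\<in>Pow R. j < 2 ^ card S}) / 3 ^ (x + y)"
    unfolding card_clumpy_n_gt card_Pow_two_power_gt[OF assms(1)] assms(2) by simp
qed

definition Sigma_fiber :: "nat \<Rightarrow> nat list \<Rightarrow> (nat list \<times> nat list \<times> nat list) set" where
  "Sigma_fiber k \<sigma> = {\<omega> \<in> outcomes k. Sigma_sum k \<omega> = \<sigma>}"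

definition ambiguous_positions :: "nat list \<Rightarrow> nat set" where
  "ambiguous_positions \<sigma> = {i. i < length \<sigma> \<and> \<sigma> ! i \<in> {1, 2}}"

text \<open>The positions where X1 and X2 are not determined by \<open>\<Sigma>\<close> and X3.\<close>
definition split_positions :: "nat list \<times> nat list \<times> nat list \<Rightarrow> nat set" where
  "split_positions \<omega> = (case \<omega> of (x1, x2, x3) \<Rightarrow> {i. i < length x1 \<and> x1 ! i + x2 ! i = 1})"

definition split_outcome :: "nat list \<Rightarrow> nat set \<Rightarrow> nat set \<Rightarrow> nat list \<times> nat list \<times> nat list" where
  "split_outcome \<sigma> S T =
     (map (\<lambda>i. if i \<in> S then of_bool (i \<in> T) else \<sigma> ! i div 2) [0..<length \<sigma>],
      map (\<lambda>i. if i \<in> S then 1 - of_bool (i \<in> T) else \<sigma> ! i div 2) [0..<length \<sigma>],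
      map (\<lambda>i. if i \<in> S then \<sigma> ! i - 1 else \<sigma> ! i mod 2) [0..<length \<sigma>])"

lemma finite_outcomes: "finite (outcomes k)"
proof -
  have "bitvecs k \<subseteq> {xs. set xs \<subseteq> {0, 1} \<and> length xs = k}" unfolding bitvecs_def by auto
  then have "finite (bitvecs k)" using finite_lists_length_eq[of "{0::nat, 1}" k] finite_subset by blast
  then show ?thesis unfolding outcomes_def by simp
qed

lemma mem_bitvecs_iff: "xs \<in> bitvecs k \<longleftrightarrow> length xs = k \<and> (\<forall>i<k. xs ! i \<le> 1)"
proof -
  have "set xs \<subseteq> {0, 1} \<longleftrightarrow> (\<forall>i<length xs. xs ! i \<le> 1)"
    by (auto simp: set_conv_nth le_Suc_eq)
  then show ?thesis unfolding bitvecs_def by auto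
qed

lemma Sigma_sum_eq_iff:
  "length \<sigma> = k \<Longrightarrow> Sigma_sum k (x1, x2, x3) = \<sigma> \<longleftrightarrow> (\<forall>i<k. x1 ! i + x2 ! i + x3 ! i = \<sigma> ! i)"
  unfolding Sigma_sum_def by (auto simp: list_eq_iff_nth_eq)

lemma mem_Sigma_fiber_iff:
  assumes "length \<sigma> = k"
  shows "(x1, x2, x3) \<in> Sigma_fiber k \<sigma> \<longleftrightarrow>
     length x1 = k \<and> length x2 = k \<and> length x3 = k \<and>
     (\<forall>i<k. x1 ! i \<le> 1 \<and> x2 ! i \<le> 1 \<and> x3 ! i \<le> 1 \<and> x1 ! i + x2 ! i + x3 ! i = \<sigma> ! i)"
  by (auto simp: Sigma_fiber_def outcomes_def mem_bitvecs_iff Sigma_sum_eq_iff[OF assms])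

lemma card_ambiguous_positions:
  "card (ambiguous_positions \<sigma>) = count_list \<sigma> 1 + count_list \<sigma> 2"
proof -
  have "ambiguous_positions \<sigma> = {i. i < length \<sigma> \<and> \<sigma> ! i = 1} \<union> {i. i < length \<sigma> \<and> \<sigma> ! i = 2}"
    unfolding ambiguous_positions_def by auto
  then have "card (ambiguous_positions \<sigma>)
      = card {i. i < length \<sigma> \<and> \<sigma> ! i = 1} + card {i. i < length \<sigma> \<and> \<sigma> ! i = 2}"
    by (simp add: card_Un_disjoint disjoint_iff)
  then show ?thesis
    by (simp add: count_list_eq_length_filter length_filter_conv_card eq_commute)
qed

lemma nth_split_outcome:
  assumes "i < length \<sigma>"
  shows "fst (split_outcome \<sigma> S T) ! i = (if i \<in> S then of_bool (i \<in> T) else \<sigma> ! i div 2)"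
    and "fst (snd (split_outcome \<sigma> S T)) ! i = (if i \<in> S then 1 - of_bool (i \<in> T) else \<sigma> ! i div 2)"
    and "snd (snd (split_outcome \<sigma> S T)) ! i = (if i \<in> S then \<sigma> ! i - 1 else \<sigma> ! i mod 2)"
  using assms by (simp_all add: split_outcome_def)

lemma length_split_outcome:
  "length (fst (split_outcome \<sigma> S T)) = length \<sigma>"
  "length (fst (snd (split_outcome \<sigma> S T))) = length \<sigma>"
  "length (snd (snd (split_outcome \<sigma> S T))) = length \<sigma>"
  by (simp_all add: split_outcome_def)

lemma X3_split_outcome: "snd (snd (split_outcome \<sigma> S T)) = snd (snd (split_outcome \<sigma> S T'))"
  by (simp add: split_outcome_def)

lemma split_outcome_split_positions:
  assumes "(x1, x2, x3) \<in> Sigma_fiber k \<sigma>" "length \<sigma> = k"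
  defines "S \<equiv> split_positions (x1, x2, x3)"
  shows "split_outcome \<sigma> S {i \<in> S. x1 ! i = 1} = (x1, x2, x3)"
proof -
  have len: "length x1 = k" "length x2 = k" "length x3 = k"
    using assms by (auto simp: mem_Sigma_fiber_iff)
  have S: "i \<in> S \<longleftrightarrow> x1 ! i + x2 ! i = 1" if "i < k" for i
    using that len unfolding S_def split_positions_def by auto
  have "fst (split_outcome \<sigma> S {i \<in> S. x1 ! i = 1}) ! i = x1 ! i"
    "fst (snd (split_outcome \<sigma> S {i \<in> S. x1 ! i = 1})) ! i = x2 ! i"
    "snd (snd (split_outcome \<sigma> S {i \<in> S. x1 ! i = 1})) ! i = x3 ! i" if "i < k" for i
  proof -
    have "x1 ! i \<in> {0, 1}" "x2 ! i \<in> {0, 1}" "x3 ! i \<in> {0, 1}" "\<sigma> ! i = x1 ! i + x2 ! i + x3 ! i"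
      using assms(1,2) that by (auto simp: mem_Sigma_fiber_iff le_Suc_eq)
    then show "fst (split_outcome \<sigma> S {i \<in> S. x1 ! i = 1}) ! i = x1 ! i"
      "fst (snd (split_outcome \<sigma> S {i \<in> S. x1 ! i = 1})) ! i = x2 ! i"
      "snd (snd (split_outcome \<sigma> S {i \<in> S. x1 ! i = 1})) ! i = x3 ! i"
      using S[OF that] that assms(2) by (auto simp: nth_split_outcome)
  qed
  with len assms(2) have "fst (split_outcome \<sigma> S {i \<in> S. x1 ! i = 1}) = x1"
    "fst (snd (split_outcome \<sigma> S {i \<in> S. x1 ! i = 1})) = x2"
    "snd (snd (split_outcome \<sigma> S {i \<in> S. x1 ! i = 1})) = x3"
    by (auto intro!: nth_equalityI simp: length_split_outcome)
  then show ?thesis by (simp add: prod_eq_iff)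
qed

lemma split_outcome_mem_Sigma_fiber:
  assumes "length \<sigma> = k" "set \<sigma> \<subseteq> {0, 1, 2, 3}" "S \<subseteq> ambiguous_positions \<sigma>"
  shows "split_outcome \<sigma> S T \<in> Sigma_fiber k \<sigma>" "split_positions (split_outcome \<sigma> S T) = S"
proof -
  obtain x1 x2 x3 where eq: "split_outcome \<sigma> S T = (x1, x2, x3)" by (cases "split_outcome \<sigma> S T")
  have len: "length x1 = k" "length x2 = k" "length x3 = k"
    using eq assms(1) by (auto simp: split_outcome_def)
  have digits: "x1 ! i \<le> 1 \<and> x2 ! i \<le> 1 \<and> x3 ! i \<le> 1 \<and> x1 ! i + x2 ! i + x3 ! i = \<sigma> ! i
      \<and> (x1 ! i + x2 ! i = 1 \<longleftrightarrow> i \<in> S)" if "i < k" for i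
  proof -
    have "\<sigma> ! i \<in> {0, 1, 2, 3}" using assms(1,2) that nth_mem by blast
    moreover have "\<sigma> ! i \<in> {1, 2}" if "i \<in> S"
      using assms(3) that unfolding ambiguous_positions_def by auto
    ultimately show ?thesis
      using nth_split_outcome[of i \<sigma> S T] that assms(1) unfolding eq
      by (cases "i \<in> S") auto
  qed
  show "split_outcome \<sigma> S T \<in> Sigma_fiber k \<sigma>"
    unfolding eq mem_Sigma_fiber_iff[OF assms(1)] using len digits by blast
  have "S \<subseteq> {..<k}" using assms(1,3) unfolding ambiguous_positions_def by auto
  then show "split_positions (split_outcome \<sigma> S T) = S"
    unfolding eq split_positions_def using len digits by auto
qed

lemma split_positions_subset_ambiguous:
  assumes "\<omega> \<in> Sigma_fiber k \<sigma>" "length \<sigma> = k"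
  shows "split_positions \<omega> \<subseteq> ambiguous_positions \<sigma>"
  using assms unfolding ambiguous_positions_def split_positions_def
  by (cases \<omega>) (auto simp: mem_Sigma_fiber_iff)

lemma X3_eq_if_split_positions_eq:
  assumes "(x1, x2, x3) \<in> Sigma_fiber k \<sigma>" "(y1, y2, y3) \<in> Sigma_fiber k \<sigma>" "length \<sigma> = k"
    and "split_positions (x1, x2, x3) = split_positions (y1, y2, y3)"
  shows "x3 = y3"
proof -
  let ?S = "split_positions (x1, x2, x3)"
  have "x3 = snd (snd (split_outcome \<sigma> ?S {i \<in> ?S. x1 ! i = 1}))"
    using split_outcome_split_positions[OF assms(1,3)] by simp
  also have "\<dots> = snd (snd (split_outcome \<sigma> ?S {i \<in> ?S. y1 ! i = 1}))"
    by (rule X3_split_outcome)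
  also have "\<dots> = y3"
    using split_outcome_split_positions[OF assms(2,3)] assms(4) by simp
  finally show ?thesis .
qed

lemma card_split_positions_fiber:
  assumes "length \<sigma> = k" "set \<sigma> \<subseteq> {0, 1, 2, 3}" "S \<subseteq> ambiguous_positions \<sigma>"
  shows "card {\<omega> \<in> Sigma_fiber k \<sigma>. split_positions \<omega> = S} = 2 ^ card S"
proof -
  have "finite S" using assms(3) by (rule finite_subset) (simp add: ambiguous_positions_def)
  have "bij_betw (split_outcome \<sigma> S) (Pow S) {\<omega> \<in> Sigma_fiber k \<sigma>. split_positions \<omega> = S}"
  proof (rule bij_betw_byWitness[where f'="\<lambda>\<omega>. {i \<in> S. fst \<omega> ! i = 1}"])
    have "i < length \<sigma>" if "i \<in> S" for i
      using assms(3) that unfolding ambiguous_positions_def by auto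
    then show "\<forall>T\<in>Pow S. {i \<in> S. fst (split_outcome \<sigma> S T) ! i = 1} = T"
      by (auto simp: nth_split_outcome of_bool_def split: if_splits)
    show "\<forall>\<omega>\<in>{\<omega> \<in> Sigma_fiber k \<sigma>. split_positions \<omega> = S}. split_outcome \<sigma> S {i \<in> S. fst \<omega> ! i = 1} = \<omega>"
    proof
      fix \<omega> assume \<omega>: "\<omega> \<in> {\<omega> \<in> Sigma_fiber k \<sigma>. split_positions \<omega> = S}"
      obtain x1 x2 x3 where "\<omega> = (x1, x2, x3)" by (cases \<omega>)
      with \<omega> show "split_outcome \<sigma> S {i \<in> S. fst \<omega> ! i = 1} = \<omega>"
        using split_outcome_split_positions[of x1 x2 x3 k \<sigma>] assms(1) by auto
    qed
    show "split_outcome \<sigma> S ` Pow S \<subseteq> {\<omega> \<in> Sigma_fiber k \<sigma>. split_positions \<omega> = S}"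
      using split_outcome_mem_Sigma_fiber[OF assms] by auto
  qed auto
  then show ?thesis using card_Pow[OF \<open>finite S\<close>] by (simp add: bij_betw_same_card)
qed

lemma finite_Sigma_fiber: "finite (Sigma_fiber k \<sigma>)"
  using finite_outcomes by (simp add: Sigma_fiber_def)

lemma card_Sigma_fiber:
  assumes "length \<sigma> = k" "set \<sigma> \<subseteq> {0, 1, 2, 3}"
  shows "card (Sigma_fiber k \<sigma>) = 3 ^ card (ambiguous_positions \<sigma>)"
proof -
  have fin: "finite (ambiguous_positions \<sigma>)" by (simp add: ambiguous_positions_def)
  have "split_positions ` Sigma_fiber k \<sigma> \<subseteq> Pow (ambiguous_positions \<sigma>)"
    using split_positions_subset_ambiguous[OF _ assms(1)] by auto
  then have "card (Sigma_fiber k \<sigma>)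
      = (\<Sum>S\<in>Pow (ambiguous_positions \<sigma>). card {\<omega> \<in> Sigma_fiber k \<sigma>. split_positions \<omega> = S})"
    using sum_card_fibers[OF finite_Sigma_fiber finite_Pow_iff[THEN iffD2, OF fin]] by simp
  also have "\<dots> = (\<Sum>S\<in>Pow (ambiguous_positions \<sigma>). 2 ^ card S)"
    using card_split_positions_fiber[OF assms] by simp
  finally show ?thesis using sum_two_power_card_Pow[OF fin] by simp
qed

lemma cond_pmf_source_pmf_Sigma:
  assumes "Sigma_fiber k \<sigma> \<noteq> {}"
  shows "cond_pmf (source_pmf k) {\<omega>. Sigma_sum k \<omega> = \<sigma>} = pmf_of_set (Sigma_fiber k \<sigma>)"
proof -
  define A where "A = outcomes k"
  define B where "B = {\<omega>. Sigma_sum k \<omega> = \<sigma>}"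
  have fiber: "Sigma_fiber k \<sigma> = A \<inter> B" unfolding Sigma_fiber_def A_def B_def by auto
  have A: "finite A" "A \<noteq> {}" using assms finite_outcomes unfolding fiber A_def by auto
  have "set_pmf (source_pmf k) \<inter> B \<noteq> {}" using assms A unfolding source_pmf_def fiber A_def by simp
  from pmf_cond[OF this] show ?thesis
    using A assms finite_outcomes unfolding B_def[symmetric] fiber source_pmf_def A_def[symmetric]
    by (intro pmf_eqI) (auto simp: measure_pmf_of_set indicator_def card_gt_0_iff)
qed

lemma zero_error_vl_code_decodes:
  assumes "zero_error_vl_code k \<phi>1 \<phi>2 N \<psi>" "\<omega> \<in> outcomes k"
  shows "case_prod \<psi> (code_output \<phi>1 \<phi>2 N \<omega>) = Sigma_sum k \<omega>"
proof -
  let ?err = "{(x1, x2, x3). \<psi> (prefix_seq (N (x1, x2, x3)) (\<phi>1 x1 x3))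
      (prefix_seq (N (x1, x2, x3)) (\<phi>2 x2 x3)) \<noteq> Sigma_sum k (x1, x2, x3)}"
  have "measure_pmf.prob (source_pmf k) ?err = 0"
    using assms(1) unfolding zero_error_vl_code_def by blast
  moreover have "set_pmf (source_pmf k) = outcomes k"
    unfolding source_pmf_def using assms(2) finite_outcomes by (intro set_pmf_of_set) auto
  ultimately have "outcomes k \<inter> ?err = {}" by (simp add: measure_pmf_zero_iff)
  then show ?thesis using assms(2) by (auto simp: code_output_def)
qed

text \<open>A decoder that sees the same output on two outcomes cannot tell them apart from an
  outcome that feeds encoder 1 like the first and encoder 2 like the second: the stopping time
  only looks at the symbols read so far.\<close>
lemma code_output_splice:
  assumes "zero_error_vl_code k \<phi>1 \<phi>2 N \<psi>"
    and "(a1, a2, a3) \<in> outcomes k" "(c1, c2, c3) \<in> outcomes k"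
    and "code_output \<phi>1 \<phi>2 N (a1, a2, a3) = code_output \<phi>1 \<phi>2 N (b1, b2, b3)"
    and "\<phi>1 c1 c3 = \<phi>1 a1 a3" "\<phi>2 c2 c3 = \<phi>2 b2 b3"
  shows "code_output \<phi>1 \<phi>2 N (c1, c2, c3) = code_output \<phi>1 \<phi>2 N (a1, a2, a3)"
proof -
  define n where "n = N (a1, a2, a3)"
  have o1: "prefix_seq n (\<phi>1 a1 a3) = prefix_seq (N (b1, b2, b3)) (\<phi>1 b1 b3)"
    and o2: "prefix_seq n (\<phi>2 a2 a3) = prefix_seq (N (b1, b2, b3)) (\<phi>2 b2 b3)"
    using assms(4) by (simp_all add: code_output_def n_def)
  have "N (b1, b2, b3) = n" using arg_cong[OF o1, of length] by (simp add: prefix_seq_def)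
  then have "\<phi>2 b2 b3 m = \<phi>2 a2 a3 m" if "m < n" for m
    using arg_cong[OF o2, of "\<lambda>zs. zs ! m"] that by (simp add: prefix_seq_def)
  then have "\<forall>m < N (a1, a2, a3). \<phi>1 a1 a3 m = \<phi>1 c1 c3 m \<and> \<phi>2 a2 a3 m = \<phi>2 c2 c3 m"
    using assms(5,6) by (simp add: n_def)
  then have "N (c1, c2, c3) = n"
    using assms(1-3) unfolding zero_error_vl_code_def n_def by blast
  then show ?thesis
    using assms(5,6) \<open>\<And>m. m < n \<Longrightarrow> \<phi>2 b2 b3 m = \<phi>2 a2 a3 m\<close>
    by (simp add: code_output_def n_def prefix_seq_def)
qed

lemma Sigma_sum_cancel:
  assumes "length x = k" "length y = k"
    and "Sigma_sum k (u, x, v) = Sigma_sum k (u, y, v) \<or> Sigma_sum k (x, u, v) = Sigma_sum k (y, u, v)"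
  shows "x = y"
proof (rule nth_equalityI)
  fix i assume "i < length x"
  then show "x ! i = y ! i"
    using assms arg_cong[of _ _ "\<lambda>s. s ! i"] by (auto simp: Sigma_sum_def)
qed (use assms in simp)

lemma code_output_inj_given_X3:
  assumes code: "zero_error_vl_code k \<phi>1 \<phi>2 N \<psi>"
    and a: "(a1, a2, x3) \<in> outcomes k" and b: "(b1, b2, x3) \<in> outcomes k"
    and out: "code_output \<phi>1 \<phi>2 N (a1, a2, x3) = code_output \<phi>1 \<phi>2 N (b1, b2, x3)"
  shows "a1 = b1 \<and> a2 = b2"
proof -
  have len: "length a1 = k" "length a2 = k" "length b1 = k" "length b2 = k"
    using a b by (auto simp: outcomes_def bitvecs_def)
  have "(a1, b2, x3) \<in> outcomes k" "(b1, a2, x3) \<in> outcomes k"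
    using a b by (auto simp: outcomes_def)
  then have "code_output \<phi>1 \<phi>2 N (a1, b2, x3) = code_output \<phi>1 \<phi>2 N (a1, a2, x3)"
    "code_output \<phi>1 \<phi>2 N (b1, a2, x3) = code_output \<phi>1 \<phi>2 N (b1, b2, x3)"
    using code_output_splice[OF code a _ out] code_output_splice[OF code b _ out[symmetric]] by auto
  then have "Sigma_sum k (a1, b2, x3) = Sigma_sum k (a1, a2, x3)"
    "Sigma_sum k (b1, a2, x3) = Sigma_sum k (a1, a2, x3)"
    using zero_error_vl_code_decodes[OF code] \<open>(a1, b2, x3) \<in> _\<close> \<open>(b1, a2, x3) \<in> _\<close> a b out
    by (simp_all only: flip: zero_error_vl_code_decodes[OF code])
  then show ?thesis
    using Sigma_sum_cancel[of b2 k a2 a1 x3] Sigma_sum_cancel[of b1 k a1 a2 x3] len by blast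
qed

lemma inj_on_split_positions_code_output:
  assumes "zero_error_vl_code k \<phi>1 \<phi>2 N \<psi>" "length \<sigma> = k"
  shows "inj_on (\<lambda>\<omega>. (split_positions \<omega>, code_output \<phi>1 \<phi>2 N \<omega>)) (Sigma_fiber k \<sigma>)"
proof (rule inj_onI)
  fix \<omega> \<omega>' assume "\<omega> \<in> Sigma_fiber k \<sigma>" "\<omega>' \<in> Sigma_fiber k \<sigma>"
    and eq: "(split_positions \<omega>, code_output \<phi>1 \<phi>2 N \<omega>) = (split_positions \<omega>', code_output \<phi>1 \<phi>2 N \<omega>')"
  moreover obtain a1 a2 a3 b1 b2 b3 where "\<omega> = (a1, a2, a3)" "\<omega>' = (b1, b2, b3)"
    by (cases \<omega>, cases \<omega>')
  ultimately have a: "(a1, a2, a3) \<in> Sigma_fiber k \<sigma>" and b: "(b1, b2, b3) \<in> Sigma_fiber k \<sigma>"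
    and "split_positions (a1, a2, a3) = split_positions (b1, b2, b3)"
    and out: "code_output \<phi>1 \<phi>2 N (a1, a2, a3) = code_output \<phi>1 \<phi>2 N (b1, b2, b3)"
    by simp_all
  then have "a3 = b3" using X3_eq_if_split_positions_eq assms(2) by blast
  with a b out have "a1 = b1 \<and> a2 = b2"
    using code_output_inj_given_X3[OF assms(1), of a1 a2 b3 b1 b2] by (simp add: Sigma_fiber_def)
  with \<open>a3 = b3\<close> show "\<omega> = \<omega>'" using \<open>\<omega> = _\<close> \<open>\<omega>' = _\<close> by simp
qed

lemma entropy_clumpy_p:
  assumes "finite R" "card R = x + y"
  shows "entropy_vec (clumpy_p x y) =
    log 2 (3 ^ (x + y)) - (\<Sum>j<(2::nat) ^ (x + y). xlog2x (card {S\<in>Pow R. j < 2 ^ card S})) / 3 ^ (x + y)"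
proof -
  have "(\<Sum>j<(2::nat) ^ (x + y). card {S\<in>Pow R. j < 2 ^ card S}) = (\<Sum>S\<in>Pow R. 2 ^ card S)"
    using assms by (intro sum_card_thresholds) (auto intro!: power_increasing card_mono simp flip: assms(2))
  also have "\<dots> = 3 ^ (x + y)" using sum_two_power_card_Pow[OF assms(1)] assms(2) by simp
  finally have "(\<Sum>j<(2::nat) ^ (x + y). card {S\<in>Pow R. j < 2 ^ card S}) = 3 ^ (x + y)" .
  from entropy_vec_counts[OF this] show ?thesis
    unfolding clumpy_p_eq_subset_counts[OF assms] by simp
qed

lemma cond_output_entropy_eq:
  assumes "length \<sigma> = k" "set \<sigma> \<subseteq> {0, 1, 2, 3}"
  defines "\<Omega> \<equiv> Sigma_fiber k \<sigma>" and "m \<equiv> card (ambiguous_positions \<sigma>)"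
  shows "cond_output_entropy k \<phi>1 \<phi>2 N \<sigma> = log 2 (3 ^ m)
    - (\<Sum>c\<in>code_output \<phi>1 \<phi>2 N ` \<Omega>. xlog2x (card {\<omega>\<in>\<Omega>. code_output \<phi>1 \<phi>2 N \<omega> = c})) / 3 ^ m"
proof -
  have "card \<Omega> = 3 ^ m" unfolding \<Omega>_def m_def by (rule card_Sigma_fiber[OF assms(1,2)])
  then have "\<Omega> \<noteq> {}" by auto
  then show ?thesis
    unfolding cond_output_entropy_def cond_pmf_source_pmf_Sigma[OF \<open>\<Omega> \<noteq> {}\<close>[unfolded \<Omega>_def]]
      \<Omega>_def[symmetric] entropy_pmf_map_pmf_of_set[OF finite_Sigma_fiber[of k \<sigma>, folded \<Omega>_def] \<open>\<Omega> \<noteq> {}\<close>]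
    using \<open>card \<Omega> = 3 ^ m\<close> by simp
qed

lemma sum_xlog2x_code_output_le:
  assumes "zero_error_vl_code k \<phi>1 \<phi>2 N \<psi>" "length \<sigma> = k" "set \<sigma> \<subseteq> {0, 1, 2, 3}"
  defines "\<Omega> \<equiv> Sigma_fiber k \<sigma>" and "A \<equiv> ambiguous_positions \<sigma>"
  shows "(\<Sum>c\<in>code_output \<phi>1 \<phi>2 N ` \<Omega>. xlog2x (card {\<omega>\<in>\<Omega>. code_output \<phi>1 \<phi>2 N \<omega> = c}))
    \<le> (\<Sum>j<(2::nat) ^ card A. xlog2x (card {S\<in>Pow A. j < 2 ^ card S}))"
proof -
  have "finite A" by (simp add: A_def ambiguous_positions_def)
  have cells: "card {\<omega>\<in>\<Omega>. split_positions \<omega> = S} = 2 ^ card S" if "S \<in> Pow A" for S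
    using card_split_positions_fiber[OF assms(2,3)] that by (simp add: \<Omega>_def A_def)
  have "(\<Sum>c\<in>code_output \<phi>1 \<phi>2 N ` \<Omega>. xlog2x (card {\<omega>\<in>\<Omega>. code_output \<phi>1 \<phi>2 N \<omega> = c}))
    \<le> (\<Sum>j<(2::nat) ^ card A. xlog2x (card {S\<in>Pow A. j < card {\<omega>\<in>\<Omega>. split_positions \<omega> = S}}))"
  proof (rule sum_fiber_sizes_le_thresholds)
    show "split_positions ` \<Omega> \<subseteq> Pow A"
      using split_positions_subset_ambiguous[OF _ assms(2)] by (auto simp: \<Omega>_def A_def)
    show "inj_on (\<lambda>\<omega>. (split_positions \<omega>, code_output \<phi>1 \<phi>2 N \<omega>)) \<Omega>"
      unfolding \<Omega>_def using assms(1,2) by (rule inj_on_split_positions_code_output)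
    show "card {\<omega>\<in>\<Omega>. split_positions \<omega> = S} \<le> 2 ^ card A" if "S \<in> Pow A" for S
      using cells[OF that] that \<open>finite A\<close> by (auto intro: power_increasing card_mono)
  qed (use \<open>finite A\<close> finite_Sigma_fiber xlog2x_increment_mono in \<open>simp_all add: \<Omega>_def xlog2x_def\<close>)
  also have "\<dots> = (\<Sum>j<(2::nat) ^ card A. xlog2x (card {S\<in>Pow A. j < 2 ^ card S}))"
    using cells by (intro sum.cong arg_cong[where f=xlog2x] arg_cong[where f=card]) auto
  finally show ?thesis .
qed

theorem mainTheorem10:
  fixes k x y :: nat
    and \<phi>1 \<phi>2 :: "nat list \<Rightarrow> nat list \<Rightarrow> nat \<Rightarrow> 'z::finite"
    and N :: "nat list \<times> nat list \<times> nat list \<Rightarrow> nat"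
    and \<psi> :: "'z list \<Rightarrow> 'z list \<Rightarrow> nat list"
    and \<sigma> :: "nat list"
  assumes "CARD('z) \<ge> 2"
    and "zero_error_vl_code k \<phi>1 \<phi>2 N \<psi>"
    and "length \<sigma> = k" and "set \<sigma> \<subseteq> {0, 1, 2, 3}"
    and "count_list \<sigma> 1 = x" and "count_list \<sigma> 2 = y"
  shows "cond_output_entropy k \<phi>1 \<phi>2 N \<sigma> \<ge> entropy_vec (clumpy_p x y)"
proof -
  define A where "A = ambiguous_positions \<sigma>"
  have A: "finite A" "card A = x + y"
    using card_ambiguous_positions[of \<sigma>] assms(5,6) by (auto simp: A_def ambiguous_positions_def)
  have "(\<Sum>c\<in>code_output \<phi>1 \<phi>2 N ` Sigma_fiber k \<sigma>.
            xlog2x (card {\<omega>\<in>Sigma_fiber k \<sigma>. code_output \<phi>1 \<phi>2 N \<omega> = c})) / 3 ^ (x + y)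
      \<le> (\<Sum>j<(2::nat) ^ (x + y). xlog2x (card {S\<in>Pow A. j < 2 ^ card S})) / 3 ^ (x + y)"
    using sum_xlog2x_code_output_le[OF assms(2-4)] A by (intro divide_right_mono) (simp_all add: A_def)
  then show ?thesis
    using cond_output_entropy_eq[OF assms(3,4), of \<phi>1 \<phi>2 N] entropy_clumpy_p[OF A] A
    by (simp add: A_def)
qed

end
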